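(* Let $A\in\mathbb C^{m\times n}$ with $m<n$ have full rank. For every $1\le q\le\infty$, $A^\dagger\in\mathrm{ginv}_{\mathrm{col}(2,q)}(A)$ and $A^\dagger\in\mathrm{pginv}_{\mathrm{col}(2,q)}(A)$. For $1\le q<\infty$ both sets equal $\{A^\dagger\}$. For $q=\infty$ they need not be singletons: there exist full-rank $A$ for which $\mathrm{ginv}_{\mathrm{col}(2,\infty)}(A)$ contains elements other than $A^\dagger$ (e.g. $A=\begin{bmatrix}\eta^{-1}&0&0\\0&1&0\end{bmatrix}$ with $0<\eta<1$), and full-rank $A$ for which $\mathrm{pginv}_{\mathrm{col}(2,\infty)}(A)$ contains elements other than $A^\dagger$.
   Context: For $M$ with columns $m_j$: $\|M\|_{\mathrm{col}(p,q)}=(\sum_j\|m_j\|_p^q)^{1/q}$ (maximum over $j$ for $q=\infty$). $\mathcal G(A)=\{X:AX=I_m\}$; $\mathrm{ginv}_\nu(A)=\arg\min_{X\in\mathcal G(A)}\|X\|_\nu$, $\mathrm{pginv}_\nu(A)=\arg\min_{X\in\mathcal G(A)}\|XA\|_\nu$ (sets). $A^\dagger=A^H(AA^H)^{-1}$. *)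

theory Defs
  imports "Jordan_Normal_Form.DL_Rank" "HOL-Library.Extended_Real"
begin

definition adj :: "complex mat \<Rightarrow> complex mat" where
  "adj A = mat (dim_col A) (dim_row A) (\<lambda>(i,j). cnj (A $$ (j,i)))"

definition col_norm2 :: "complex mat \<Rightarrow> nat \<Rightarrow> real" where
  "col_norm2 M j = sqrt (\<Sum>i<dim_row M. (cmod (M $$ (i,j)))\<^sup>2)"

text \<open>Mixed column norm col(2,q), q in [1,infinity]; for q = infinity the maximum
  over the columns (0 for a matrix without columns).\<close>
definition colnorm :: "ereal \<Rightarrow> complex mat \<Rightarrow> real" where
  "colnorm q M = (if q = \<infinity> then Max (insert 0 ((col_norm2 M) ` {..<dim_col M}))
                 else (\<Sum>j<dim_col M. col_norm2 M j powr real_of_ereal q) powr (1 / real_of_ereal q))"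

definition ginvs :: "complex mat \<Rightarrow> complex mat set" where
  "ginvs A = {X. X \<in> carrier_mat (dim_col A) (dim_row A) \<and> A * X = 1\<^sub>m (dim_row A)}"

definition ginv :: "ereal \<Rightarrow> complex mat \<Rightarrow> complex mat set" where
  "ginv q A = {X \<in> ginvs A. \<forall>Y \<in> ginvs A. colnorm q X \<le> colnorm q Y}"

definition pginv :: "ereal \<Rightarrow> complex mat \<Rightarrow> complex mat set" where
  "pginv q A = {X \<in> ginvs A. \<forall>Y \<in> ginvs A. colnorm q (X * A) \<le> colnorm q (Y * A)}"

text \<open>Moore-Penrose pseudoinverse A^H (A A^H)^{-1} (for full row rank A).\<close>
definition pinv :: "complex mat \<Rightarrow> complex mat" where
  "pinv A = adj A * (THE B. B \<in> carrier_mat (dim_row A) (dim_row A) \<and>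
        A * adj A * B = 1\<^sub>m (dim_row A) \<and> B * (A * adj A) = 1\<^sub>m (dim_row A))"

definition full_row_rank :: "complex mat \<Rightarrow> bool" where
  "full_row_rank A = (vec_space.rank (dim_row A) A = dim_row A)"

end

theory Submission
  imports Defs
begin

text \<open>Let \<open>A\<close> have full row rank and let \<open>X\<close> be any right inverse of \<open>A\<close>, so
  \<open>X = A\<^sup>+ + N\<close> with \<open>A N = 0\<close>. As \<open>A\<^sup>+ = A\<^sup>H (A A\<^sup>H)\<^sup>-\<^sup>1\<close> has its range in that
  of \<open>A\<^sup>H\<close>, which is orthogonal to the kernel of \<open>A\<close>, Pythagoras gives for every \<open>C\<close>
  and every column index \<open>j\<close>: \<open>\<parallel>(X C)\<^sub>j\<parallel>\<^sup>2 = \<parallel>(A\<^sup>+ C)\<^sub>j\<parallel>\<^sup>2 + \<parallel>(N C)\<^sub>j\<parallel>\<^sup>2\<close>.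
  The norm col(2,q) is monotone in the column lengths, so \<open>A\<^sup>+ C\<close> is a minimiser; for
  \<open>q < \<infinity>\<close> it is strictly monotone in each column, so any minimiser has \<open>N C = 0\<close>.
  Taking \<open>C = I\<close> gives the claims about ginv, taking \<open>C = A\<close> and cancelling \<open>A\<close> with a right
  inverse those about pginv. For \<open>q = \<infinity>\<close> only the longest column matters, which leaves room
  to change the shorter ones: this is what the two examples exploit.\<close>

section \<open>Full row rank and right inverses\<close>

lemma (in vec_space) rank_eq_iff_surjective:
  assumes A: "A \<in> carrier_mat n nc"
  shows "rank A = n \<longleftrightarrow> (\<forall>y \<in> carrier_vec n. \<exists>x \<in> carrier_vec nc. A *\<^sub>v x = y)"
proof -
  have cols: "set (cols A) \<subseteq> carrier_vec n" using A cols_dim by blast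
  have "rank A = n \<longleftrightarrow> span (set (cols A)) = carrier_vec n"
  proof
    assume r: "rank A = n"
    obtain S where S: "finite S" "maximal S (\<lambda>T. T \<subseteq> set (cols A) \<and> lin_indpt T)"
      using maximal_exists_superset[of "set (cols A)" "\<lambda>T. T \<subseteq> set (cols A) \<and> lin_indpt T" "{}"]
      by (auto simp: lin_dep_def)
    have S_indpt: "S \<subseteq> set (cols A)" "lin_indpt S" using S(2) unfolding maximal_def by auto
    have "basis S"
      using rank_card_indpt[OF A S(2)] r S(1) S_indpt cols dim_is_n fin_dim by (intro dim_li_is_basis) auto
    then have "carrier_vec n = span S" unfolding basis_def by auto
    also have "\<dots> \<subseteq> span (set (cols A))" using span_is_monotone S_indpt(1) by metis
    finally show "span (set (cols A)) = carrier_vec n" using cols span_is_subset2 by auto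
  next
    assume "span (set (cols A)) = carrier_vec n"
    then have "span_vs (set (cols A)) = V" by simp
    then show "rank A = n" unfolding rank_def using dim_is_n by simp
  qed
  also have "\<dots> \<longleftrightarrow> (\<forall>y \<in> carrier_vec n. \<exists>x \<in> carrier_vec nc. A *\<^sub>v x = y)"
    using col_space_eq[OF A] A unfolding col_space_def by auto
  finally show ?thesis .
qed

lemma full_row_rank_iff_right_inverse:
  assumes A: "A \<in> carrier_mat m n"
  shows "full_row_rank A \<longleftrightarrow> (\<exists>R \<in> carrier_mat n m. A * R = 1\<^sub>m m)"
proof
  assume "full_row_rank A"
  then have "\<forall>j<m. \<exists>x \<in> carrier_vec n. A *\<^sub>v x = unit_vec m j"
    using vec_space.rank_eq_iff_surjective[OF A] A unfolding full_row_rank_def by auto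
  then obtain x where x: "\<And>j. j < m \<Longrightarrow> x j \<in> carrier_vec n \<and> A *\<^sub>v x j = unit_vec m j"
    by metis
  define R where "R = mat n m (\<lambda>(i, j). x j $ i)"
  have "A * R = 1\<^sub>m m"
  proof (rule eq_matI)
    fix i j assume i: "i < dim_row (1\<^sub>m m)" and j: "j < dim_col (1\<^sub>m m)"
    have "col R j = x j" using x[of j] j unfolding R_def by (intro eq_vecI) auto
    then have "(A * R) $$ (i, j) = (A *\<^sub>v x j) $ i" using i j A unfolding R_def by simp
    then show "(A * R) $$ (i, j) = 1\<^sub>m m $$ (i, j)" using x[of j] i j by simp
  qed (use A in \<open>auto simp: R_def\<close>)
  then show "\<exists>R \<in> carrier_mat n m. A * R = 1\<^sub>m m" unfolding R_def by auto
next
  assume "\<exists>R \<in> carrier_mat n m. A * R = 1\<^sub>m m"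
  then obtain R where R: "R \<in> carrier_mat n m" "A * R = 1\<^sub>m m" by blast
  have "A *\<^sub>v (R *\<^sub>v y) = y" if "y \<in> carrier_vec m" for y
    using A R that by (metis assoc_mult_mat_vec one_mult_mat_vec)
  then show "full_row_rank A"
    using vec_space.rank_eq_iff_surjective[OF A] A R unfolding full_row_rank_def
    by (metis carrier_matD(1) mult_mat_vec_carrier)
qed

section \<open>Conjugate transpose and the Hermitian inner product\<close>

lemma adj_carrier [simp]: "A \<in> carrier_mat m n \<Longrightarrow> adj A \<in> carrier_mat n m"
  and dim_row_adj [simp]: "dim_row (adj A) = dim_col A"
  and dim_col_adj [simp]: "dim_col (adj A) = dim_row A"
  and index_adj [simp]: "i < dim_col A \<Longrightarrow> j < dim_row A \<Longrightarrow> adj A $$ (i, j) = cnj (A $$ (j, i))"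
  by (auto simp: adj_def)

lemma adj_one [simp]: "adj (1\<^sub>m n) = 1\<^sub>m n"
  by (rule eq_matI) (auto simp: adj_def)

lemma adj_mult:
  assumes A: "A \<in> carrier_mat m n" and B: "B \<in> carrier_mat n p"
  shows "adj (A * B) = adj B * adj A"
  using A B by (intro eq_matI) (auto simp: scalar_prod_def mult.commute intro!: sum.cong)

definition cinner :: "complex vec \<Rightarrow> complex vec \<Rightarrow> complex" where
  "cinner v w = (\<Sum>i<dim_vec v. cnj (v $ i) * w $ i)"

definition sq_norm_vec :: "complex vec \<Rightarrow> real" where
  "sq_norm_vec v = (\<Sum>i<dim_vec v. (cmod (v $ i))\<^sup>2)"

lemma cinner_zero_right [simp]: "v \<in> carrier_vec n \<Longrightarrow> cinner v (0\<^sub>v n) = 0"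
  by (simp add: cinner_def)

lemma cinner_adj_mult_mat_vec:
  assumes M: "M \<in> carrier_mat m n" and w: "w \<in> carrier_vec m" and u: "u \<in> carrier_vec n"
  shows "cinner (adj M *\<^sub>v w) u = cinner w (M *\<^sub>v u)"
proof -
  have "cinner w (M *\<^sub>v u) = (\<Sum>k<m. \<Sum>i<n. cnj (w $ k) * M $$ (k, i) * u $ i)"
    using M w u by (auto simp: cinner_def scalar_prod_def atLeast0LessThan sum_distrib_left
        mult.assoc intro!: sum.cong)
  also have "\<dots> = (\<Sum>i<n. \<Sum>k<m. cnj (w $ k) * M $$ (k, i) * u $ i)"
    by (rule sum.swap)
  also have "\<dots> = cinner (adj M *\<^sub>v w) u"
    using M w u by (auto simp: cinner_def scalar_prod_def atLeast0LessThan
        sum_distrib_left sum_distrib_right mult.commute intro!: sum.cong)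
  finally show ?thesis ..
qed

lemma sq_norm_vec_eq_Re_cinner: "sq_norm_vec v = Re (cinner v v)"
  unfolding sq_norm_vec_def cinner_def cmod_power2 by (simp add: power2_eq_square)

lemma sq_norm_vec_eq_0_iff:
  assumes "v \<in> carrier_vec n"
  shows "sq_norm_vec v = 0 \<longleftrightarrow> v = 0\<^sub>v n"
  using assms by (auto simp: sq_norm_vec_def sum_nonneg_eq_0_iff vec_eq_iff)

lemma sq_norm_vec_add_orthogonal:
  assumes v: "v \<in> carrier_vec n" and w: "w \<in> carrier_vec n" and orth: "cinner v w = 0"
  shows "sq_norm_vec (v + w) = sq_norm_vec v + sq_norm_vec w"
proof -
  have expand: "(cmod (a + b))\<^sup>2 = (cmod a)\<^sup>2 + (cmod b)\<^sup>2 + 2 * Re (cnj a * b)" for a b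
    unfolding cmod_power2 by (simp add: power2_eq_square algebra_simps)
  have "sq_norm_vec (v + w) = (\<Sum>i<n. (cmod (v $ i))\<^sup>2 + (cmod (w $ i))\<^sup>2 + 2 * Re (cnj (v $ i) * w $ i))"
    using v w by (simp add: sq_norm_vec_def expand)
  also have "\<dots> = sq_norm_vec v + sq_norm_vec w + 2 * Re (cinner v w)"
    using v w by (simp add: sq_norm_vec_def cinner_def sum.distrib sum_distrib_left)
  finally show ?thesis using orth by simp
qed

lemma col_norm2_sq: "j < dim_col M \<Longrightarrow> (col_norm2 M j)\<^sup>2 = sq_norm_vec (col M j)"
  by (simp add: col_norm2_def sq_norm_vec_def sum_nonneg)

section \<open>The pseudoinverse\<close>

lemma ginvs_iff: "A \<in> carrier_mat m n \<Longrightarrow> X \<in> ginvs A \<longleftrightarrow> X \<in> carrier_mat n m \<and> A * X = 1\<^sub>m m"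
  by (simp add: ginvs_def)

lemma det_mult_adj_neq_0:
  assumes A: "A \<in> carrier_mat m n" and r: "full_row_rank A"
  shows "det (A * adj A) \<noteq> 0"
proof
  assume "det (A * adj A) = 0"
  then obtain v where v: "v \<in> carrier_vec m" "v \<noteq> 0\<^sub>v m" "(A * adj A) *\<^sub>v v = 0\<^sub>v m"
    using det_0_iff_vec_prod_zero_field[of "A * adj A" m] A by auto
  obtain R where R: "R \<in> carrier_mat n m" "A * R = 1\<^sub>m m"
    using r full_row_rank_iff_right_inverse[OF A] by blast
  define u where "u = adj A *\<^sub>v v"
  have u: "u \<in> carrier_vec n" using A v unfolding u_def by (metis adj_carrier mult_mat_vec_carrier)
  have "sq_norm_vec u = Re (cinner v (A *\<^sub>v u))"
    using cinner_adj_mult_mat_vec[OF A v(1) u] by (simp add: sq_norm_vec_eq_Re_cinner u_def)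
  also have "A *\<^sub>v u = 0\<^sub>v m"
    using v(3) unfolding u_def assoc_mult_mat_vec[OF A adj_carrier[OF A] v(1)] .
  finally have "u = 0\<^sub>v n" using sq_norm_vec_eq_0_iff[OF u] v(1) by simp
  have "v = adj (A * R) *\<^sub>v v" using R(2) v(1) by simp
  also have "\<dots> = adj R *\<^sub>v u"
    unfolding u_def adj_mult[OF A R(1)] by (rule assoc_mult_mat_vec[OF adj_carrier[OF R(1)] adj_carrier[OF A] v(1)])
  finally show False using \<open>u = 0\<^sub>v n\<close> R(1) v(2) by (auto simp: vec_eq_iff scalar_prod_def)
qed

lemma pinv_eq_adj_mult:
  assumes A: "A \<in> carrier_mat m n" and r: "full_row_rank A"
  obtains B where "B \<in> carrier_mat m m" "pinv A = adj A * B" "A * adj A * B = 1\<^sub>m m"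
proof -
  have AAH: "A * adj A \<in> carrier_mat m m" using A by simp
  obtain B where B: "B \<in> carrier_mat m m" "A * adj A * B = 1\<^sub>m m" "B * (A * adj A) = 1\<^sub>m m"
    using det_non_zero_imp_unit[OF AAH det_mult_adj_neq_0[OF A r], of "()"]
    unfolding Units_def ring_mat_def by auto
  have uniq: "B' = B" if B': "B' \<in> carrier_mat m m" "A * adj A * B' = 1\<^sub>m m" for B'
  proof -
    have "B' = B * (A * adj A) * B'" using B' B by simp
    also have "\<dots> = B * (A * adj A * B')" using assoc_mult_mat[OF B(1) AAH B'(1)] .
    also have "\<dots> = B" using B B' by simp
    finally show ?thesis .
  qed
  have "(THE B'. B' \<in> carrier_mat m m \<and> A * adj A * B' = 1\<^sub>m m \<and> B' * (A * adj A) = 1\<^sub>m m) = B"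
    by (rule the_equality) (use B uniq in blast)+
  then have "pinv A = adj A * B" using A unfolding pinv_def by simp
  then show thesis using that B by blast
qed

lemma pinv_mem_ginvs:
  assumes A: "A \<in> carrier_mat m n" and r: "full_row_rank A"
  shows "pinv A \<in> ginvs A"
proof -
  obtain B where B: "B \<in> carrier_mat m m" "pinv A = adj A * B" "A * adj A * B = 1\<^sub>m m"
    using pinv_eq_adj_mult[OF A r] .
  have "A * pinv A = A * adj A * B" using A B by (simp add: assoc_mult_mat[of A m n "adj A" m B m])
  then show ?thesis using A B mult_carrier_mat[OF adj_carrier[OF A] B(1)] by (simp add: ginvs_iff)
qed

lemma cinner_pinv_kernel:
  assumes A: "A \<in> carrier_mat m n" and r: "full_row_rank A"
    and v: "v \<in> carrier_vec m" and u: "u \<in> carrier_vec n" and Au: "A *\<^sub>v u = 0\<^sub>v m"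
  shows "cinner (pinv A *\<^sub>v v) u = 0"
proof -
  obtain B where B: "B \<in> carrier_mat m m" "pinv A = adj A * B"
    using pinv_eq_adj_mult[OF A r] by blast
  have "cinner (pinv A *\<^sub>v v) u = cinner (adj A *\<^sub>v (B *\<^sub>v v)) u"
    using B assoc_mult_mat_vec[OF adj_carrier[OF A] B(1) v] by simp
  also have "\<dots> = cinner (B *\<^sub>v v) (A *\<^sub>v u)"
    using B v by (intro cinner_adj_mult_mat_vec[OF A _ u]) simp
  also have "\<dots> = 0" using Au B v by simp
  finally show ?thesis .
qed

lemma col_norm2_right_inverse_mult:
  assumes A: "A \<in> carrier_mat m n" and r: "full_row_rank A" and X: "X \<in> ginvs A"
    and C: "C \<in> carrier_mat m p" and j: "j < p"
  shows "(col_norm2 (X * C) j)\<^sup>2 = (col_norm2 (pinv A * C) j)\<^sup>2 + (col_norm2 ((X - pinv A) * C) j)\<^sup>2"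
proof -
  have X': "X \<in> carrier_mat n m" "A * X = 1\<^sub>m m" using X A by (auto simp: ginvs_iff)
  have P: "pinv A \<in> carrier_mat n m" "A * pinv A = 1\<^sub>m m"
    using pinv_mem_ginvs[OF A r] A by (auto simp: ginvs_iff)
  define N where "N = X - pinv A"
  define c where "c = col C j"
  have N: "N \<in> carrier_mat n m" and c: "c \<in> carrier_vec m" using P C j by (auto simp: N_def c_def)
  have "A * N = 0\<^sub>m m m" using mult_minus_distrib_mat[OF A X'(1) P(1)] X'(2) P(2) by (simp add: N_def)
  then have kernel: "A *\<^sub>v (N *\<^sub>v c) = 0\<^sub>v m"
    using assoc_mult_mat_vec[OF A N c, symmetric] c by auto
  have "X *\<^sub>v c = pinv A *\<^sub>v c + N *\<^sub>v c"
    using P X' c by (auto simp: N_def minus_mult_distrib_mat_vec vec_eq_iff)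
  then have pyth: "sq_norm_vec (X *\<^sub>v c) = sq_norm_vec (pinv A *\<^sub>v c) + sq_norm_vec (N *\<^sub>v c)"
    using sq_norm_vec_add_orthogonal cinner_pinv_kernel[OF A r c _ kernel] P N c
    by (metis mult_mat_vec_carrier)
  have col_sq: "(col_norm2 (M * C) j)\<^sup>2 = sq_norm_vec (M *\<^sub>v c)" if M: "M \<in> carrier_mat n m" for M
  proof -
    have "(col_norm2 (M * C) j)\<^sup>2 = sq_norm_vec (col (M * C) j)" using C j by (intro col_norm2_sq) simp
    also have "col (M * C) j = M *\<^sub>v c" unfolding c_def by (rule col_mult2[OF M C j])
    finally show ?thesis .
  qed
  show ?thesis
    unfolding N_def[symmetric] col_sq[OF X'(1)] col_sq[OF P(1)] col_sq[OF N] by (rule pyth)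
qed

section \<open>Mixed column norms\<close>

lemma col_norm2_nonneg: "0 \<le> col_norm2 M j"
  by (simp add: col_norm2_def sum_nonneg)

lemma col_norm2_ge_entry: "i < dim_row M \<Longrightarrow> cmod (M $$ (i, j)) \<le> col_norm2 M j"
  unfolding col_norm2_def by (intro real_le_rsqrt member_le_sum) auto

lemma col_norm2_pos_if_nonzero:
  assumes M: "M \<in> carrier_mat n p" and "M \<noteq> 0\<^sub>m n p"
  obtains j where "j < p" "0 < col_norm2 M j"
proof -
  obtain i j where ij: "i < n" "j < p" "M $$ (i, j) \<noteq> 0"
    using assms by (auto simp: mat_eq_iff)
  then have "0 < col_norm2 M j"
    using col_norm2_ge_entry[of i M j] M by (metis carrier_matD(1) zero_less_norm_iff less_le_trans)
  then show thesis using that ij(2) by blast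
qed

lemma colnorm_inf_ge: "j < dim_col M \<Longrightarrow> col_norm2 M j \<le> colnorm \<infinity> M"
  unfolding colnorm_def by (auto intro!: Max_ge)

lemma colnorm_inf_le:
  "0 \<le> c \<Longrightarrow> (\<And>j. j < dim_col M \<Longrightarrow> col_norm2 M j \<le> c) \<Longrightarrow> colnorm \<infinity> M \<le> c"
  unfolding colnorm_def by simp

lemma colnorm_inf_nonneg: "0 \<le> colnorm \<infinity> M"
  unfolding colnorm_def by (auto intro!: Max_ge)

lemma colnorm_mono:
  assumes q: "1 \<le> q" and d: "dim_col M = dim_col M'"
    and le: "\<And>j. j < dim_col M \<Longrightarrow> col_norm2 M j \<le> col_norm2 M' j"
  shows "colnorm q M \<le> colnorm q M'"
proof (cases "q = \<infinity>")
  case True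
  show ?thesis unfolding True
    by (rule colnorm_inf_le[OF colnorm_inf_nonneg]) (use le d colnorm_inf_ge order_trans in metis)
next
  case False
  obtain r where r: "1 \<le> r" and "colnorm q M = (\<Sum>j<dim_col M. col_norm2 M j powr r) powr (1 / r)"
      and "colnorm q M' = (\<Sum>j<dim_col M. col_norm2 M' j powr r) powr (1 / r)"
    using q False d by (cases q) (auto simp: colnorm_def)
  moreover have "(\<Sum>j<dim_col M. col_norm2 M j powr r) \<le> (\<Sum>j<dim_col M. col_norm2 M' j powr r)"
    using le r by (intro sum_mono powr_mono2) (auto simp: col_norm2_nonneg)
  ultimately show ?thesis
    using r by (auto intro!: powr_mono2 sum_nonneg)
qed

lemma colnorm_strict_mono:
  assumes q: "1 \<le> q" "q \<noteq> \<infinity>" and d: "dim_col M = dim_col M'"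
    and le: "\<And>j. j < dim_col M \<Longrightarrow> col_norm2 M j \<le> col_norm2 M' j"
    and k: "k < dim_col M" "col_norm2 M k < col_norm2 M' k"
  shows "colnorm q M < colnorm q M'"
proof -
  obtain r where r: "1 \<le> r" and "colnorm q M = (\<Sum>j<dim_col M. col_norm2 M j powr r) powr (1 / r)"
      and "colnorm q M' = (\<Sum>j<dim_col M. col_norm2 M' j powr r) powr (1 / r)"
    using q d by (cases q) (auto simp: colnorm_def)
  moreover have "(\<Sum>j<dim_col M. col_norm2 M j powr r) < (\<Sum>j<dim_col M. col_norm2 M' j powr r)"
    using le k r by (intro sum_strict_mono_ex1) (auto intro!: powr_mono2 powr_less_mono2 col_norm2_nonneg)
  ultimately show ?thesis
    using r by (auto intro!: powr_less_mono2 sum_nonneg)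
qed

section \<open>Minimality of the pseudoinverse\<close>

lemma minus_mat_eq_0_iff:
  "M \<in> carrier_mat n p \<Longrightarrow> N \<in> carrier_mat n p \<Longrightarrow> M - N = 0\<^sub>m n p \<longleftrightarrow> M = (N :: 'a :: ab_group_add mat)"
  by (auto simp: mat_eq_iff)

lemma col_norm2_pinv_mult_le:
  assumes A: "A \<in> carrier_mat m n" and r: "full_row_rank A" and X: "X \<in> ginvs A"
    and C: "C \<in> carrier_mat m p" and j: "j < p"
  shows "col_norm2 (pinv A * C) j \<le> col_norm2 (X * C) j"
    and "0 < col_norm2 ((X - pinv A) * C) j \<Longrightarrow> col_norm2 (pinv A * C) j < col_norm2 (X * C) j"
proof -
  note pyth = col_norm2_right_inverse_mult[OF A r X C j]
  have "(col_norm2 (pinv A * C) j)\<^sup>2 \<le> (col_norm2 (X * C) j)\<^sup>2" unfolding pyth by simp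
  then show "col_norm2 (pinv A * C) j \<le> col_norm2 (X * C) j"
    by (rule power2_le_imp_le) (rule col_norm2_nonneg)
  assume "0 < col_norm2 ((X - pinv A) * C) j"
  then have "(col_norm2 (pinv A * C) j)\<^sup>2 < (col_norm2 (X * C) j)\<^sup>2" unfolding pyth by simp
  then show "col_norm2 (pinv A * C) j < col_norm2 (X * C) j"
    by (rule power2_less_imp_less) (rule col_norm2_nonneg)
qed

lemma colnorm_pinv_mult_le:
  assumes A: "A \<in> carrier_mat m n" and r: "full_row_rank A" and X: "X \<in> ginvs A"
    and C: "C \<in> carrier_mat m p" and q: "1 \<le> q"
  shows "colnorm q (pinv A * C) \<le> colnorm q (X * C)"
proof (rule colnorm_mono[OF q])
  show "dim_col (pinv A * C) = dim_col (X * C)" by simp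
  fix j assume "j < dim_col (pinv A * C)"
  then show "col_norm2 (pinv A * C) j \<le> col_norm2 (X * C) j"
    using col_norm2_pinv_mult_le(1)[OF A r X C] C by simp
qed

lemma colnorm_pinv_mult_unique:
  assumes A: "A \<in> carrier_mat m n" and r: "full_row_rank A" and X: "X \<in> ginvs A"
    and C: "C \<in> carrier_mat m p" and q: "1 \<le> q" "q \<noteq> \<infinity>"
    and min: "colnorm q (X * C) \<le> colnorm q (pinv A * C)"
  shows "X * C = pinv A * C"
proof (rule ccontr)
  assume ne: "X * C \<noteq> pinv A * C"
  have X': "X \<in> carrier_mat n m" and P: "pinv A \<in> carrier_mat n m"
    using X pinv_mem_ginvs[OF A r] A by (auto simp: ginvs_iff)
  have "(X - pinv A) * C \<noteq> 0\<^sub>m n p"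
    using ne minus_mult_distrib_mat[OF X' P C] minus_mat_eq_0_iff[of "X * C" n p "pinv A * C"] X' P C
    by simp
  then obtain k where k: "k < p" "0 < col_norm2 ((X - pinv A) * C) k"
    using col_norm2_pos_if_nonzero[of "(X - pinv A) * C" n p] P C by (metis minus_carrier_mat mult_carrier_mat)
  have "colnorm q (pinv A * C) < colnorm q (X * C)"
    using col_norm2_pinv_mult_le[OF A r X C] k C by (intro colnorm_strict_mono[OF q]) auto
  then show False using min by simp
qed

lemma pinv_mem_ginv:
  assumes A: "A \<in> carrier_mat m n" and r: "full_row_rank A" and q: "1 \<le> q"
  shows "pinv A \<in> ginv q A"
proof -
  have "colnorm q (pinv A) \<le> colnorm q Y" if Y: "Y \<in> ginvs A" for Y
    using colnorm_pinv_mult_le[OF A r Y one_carrier_mat q] Y pinv_mem_ginvs[OF A r] A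
    by (metis ginvs_iff right_mult_one_mat)
  then show ?thesis using pinv_mem_ginvs[OF A r] by (simp add: ginv_def)
qed

lemma pinv_mem_pginv:
  assumes A: "A \<in> carrier_mat m n" and r: "full_row_rank A" and q: "1 \<le> q"
  shows "pinv A \<in> pginv q A"
  using colnorm_pinv_mult_le[OF A r _ A q] pinv_mem_ginvs[OF A r] by (auto simp: pginv_def)

lemma ginv_eq_pinv:
  assumes A: "A \<in> carrier_mat m n" and r: "full_row_rank A" and q: "1 \<le> q" "q \<noteq> \<infinity>"
  shows "ginv q A = {pinv A}"
proof -
  have "X = pinv A" if X: "X \<in> ginv q A" for X
  proof -
    have "X \<in> ginvs A" and "colnorm q (X * 1\<^sub>m m) \<le> colnorm q (pinv A * 1\<^sub>m m)"
      using X pinv_mem_ginvs[OF A r] A by (auto simp: ginv_def ginvs_iff)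
    then have "X * 1\<^sub>m m = pinv A * 1\<^sub>m m"
      by (rule colnorm_pinv_mult_unique[OF A r _ one_carrier_mat q])
    then show ?thesis using \<open>X \<in> ginvs A\<close> pinv_mem_ginvs[OF A r] A by (metis ginvs_iff right_mult_one_mat)
  qed
  then show ?thesis using pinv_mem_ginv[OF A r q(1)] by blast
qed

lemma pginv_eq_pinv:
  assumes A: "A \<in> carrier_mat m n" and r: "full_row_rank A" and q: "1 \<le> q" "q \<noteq> \<infinity>"
  shows "pginv q A = {pinv A}"
proof -
  obtain R where R: "R \<in> carrier_mat n m" "A * R = 1\<^sub>m m"
    using r full_row_rank_iff_right_inverse[OF A] by blast
  have "X = pinv A" if X: "X \<in> pginv q A" for X
  proof -
    have XG: "X \<in> ginvs A" and "colnorm q (X * A) \<le> colnorm q (pinv A * A)"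
      using X pinv_mem_ginvs[OF A r] by (auto simp: pginv_def)
    then have XA: "X * A = pinv A * A"
      by (rule colnorm_pinv_mult_unique[OF A r _ A q])
    have X': "X \<in> carrier_mat n m" and P: "pinv A \<in> carrier_mat n m"
      using XG pinv_mem_ginvs[OF A r] A by (auto simp: ginvs_iff)
    have "X = X * A * R" using X' A R by (simp add: assoc_mult_mat[OF X' A R(1)])
    also have "\<dots> = pinv A" using XA P A R by (simp add: assoc_mult_mat[OF P A R(1)])
    finally show ?thesis .
  qed
  then show ?thesis using pinv_mem_pginv[OF A r q(1)] by blast
qed

section \<open>Non-uniqueness for the maximum column norm\<close>

lemma row_adj: "i < dim_col A \<Longrightarrow> row (adj A) i = conjugate (col A i)"
  by (auto simp: adj_def)

lemma pinv_index:
  assumes A: "A \<in> carrier_mat m n" and r: "full_row_rank A"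
  obtains B where "B \<in> carrier_mat m m" "\<And>i j. i < n \<Longrightarrow> j < m \<Longrightarrow> pinv A $$ (i, j) = conjugate (col A i) \<bullet> col B j"
proof -
  obtain B where B: "B \<in> carrier_mat m m" "pinv A = adj A * B" using pinv_eq_adj_mult[OF A r] by blast
  then show thesis using that A by (simp add: row_adj)
qed

lemma pinv_index_eq_if_col_eq:
  assumes A: "A \<in> carrier_mat m n" and r: "full_row_rank A"
    and i: "i < n" "i' < n" and j: "j < m" and eq: "col A i = col A i'"
  shows "pinv A $$ (i, j) = pinv A $$ (i', j)"
  using pinv_index[OF A r] i j eq by metis

lemma pinv_index_eq_0_if_col_eq_0:
  assumes A: "A \<in> carrier_mat m n" and r: "full_row_rank A"
    and i: "i < n" and j: "j < m" and zero: "col A i = 0\<^sub>v m"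
  shows "pinv A $$ (i, j) = 0"
proof -
  obtain B where "B \<in> carrier_mat m m" "pinv A $$ (i, j) = conjugate (col A i) \<bullet> col B j"
    using pinv_index[OF A r] i j by metis
  then show ?thesis using zero j by simp
qed

lemma ginv_inf_ne_pinv:
  fixes \<eta> :: real
  assumes \<eta>: "0 < \<eta>" "\<eta> < 1"
  defines "A \<equiv> mat_of_rows_list 3 [[complex_of_real (1 / \<eta>), 0, 0], [0, 1, 0]]"
  shows "full_row_rank A" and "\<exists>X \<in> ginv \<infinity> A. X \<noteq> pinv A"
proof -
  \<comment> \<open>Every right inverse has a column of length at least \<open>1\<close>; \<open>X\<close> attains this bound
    although its first column has a nonzero last entry, which no column of \<open>A\<^sup>+\<close> has.\<close>
  define X where "X = mat_of_rows_list 2 [[complex_of_real \<eta>, 0], [0, 1], [complex_of_real (1 - \<eta>), 0]]"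
  have A: "A \<in> carrier_mat 2 3" and X: "X \<in> carrier_mat 3 2"
    by (simp_all add: A_def X_def mat_of_rows_list_def numeral_2_eq_2 numeral_3_eq_3)
  have "A * X = 1\<^sub>m 2"
    using \<eta> by (auto simp: A_def X_def mat_eq_iff mat_of_rows_list_def scalar_prod_def less_Suc_eq
        numeral_eq_Suc lessThan_Suc of_real_mult[symmetric] simp del: of_real_mult)
  then have XG: "X \<in> ginvs A" using A X by (simp add: ginvs_iff)
  then show r: "full_row_rank A" using full_row_rank_iff_right_inverse[OF A] A by (auto simp: ginvs_iff)
  have "colnorm \<infinity> X \<le> 1"
  proof (rule colnorm_inf_le)
    have "\<eta>\<^sup>2 + (1 - \<eta>)\<^sup>2 \<le> 1" using \<eta> by (simp add: power2_eq_square algebra_simps mult_le_cancel_left1)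
    then show "col_norm2 X j \<le> 1" if "j < dim_col X" for j
      using that X \<eta> by (auto simp: X_def col_norm2_def mat_of_rows_list_def less_Suc_eq
          numeral_eq_Suc lessThan_Suc abs_of_pos simp flip: of_real_diff)
  qed simp
  moreover have "1 \<le> colnorm \<infinity> Y" if "Y \<in> ginvs A" for Y
  proof -
    have Y: "Y \<in> carrier_mat 3 2" and "A * Y = 1\<^sub>m 2" using that A by (auto simp: ginvs_iff)
    then have "Y $$ (1, 1) = 1"
      by (auto simp: A_def mat_eq_iff mat_of_rows_list_def scalar_prod_def numeral_eq_Suc lessThan_Suc)
    then show ?thesis
      using col_norm2_ge_entry[of 1 Y 1] colnorm_inf_ge[of 1 Y] Y by auto
  qed
  ultimately have "X \<in> ginv \<infinity> A" using XG by (force simp: ginv_def)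
  moreover have "pinv A $$ (2, 0) = 0"
    by (rule pinv_index_eq_0_if_col_eq_0[OF A r])
      (auto simp: A_def mat_of_rows_list_def vec_eq_iff less_Suc_eq numeral_eq_Suc)
  moreover have "X $$ (2, 0) \<noteq> 0" using \<eta> by (simp add: X_def mat_of_rows_list_def)
  ultimately show "\<exists>X \<in> ginv \<infinity> A. X \<noteq> pinv A" by metis
qed

lemma pginv_inf_ne_pinv:
  defines "A \<equiv> mat_of_rows_list 3 [[1, 1, 0], [0, 0, 1]] :: complex mat"
  shows "full_row_rank A" and "\<exists>X \<in> pginv \<infinity> A. X \<noteq> pinv A"
proof -
  \<comment> \<open>The first two columns of \<open>A\<close> agree, so the first two rows of \<open>A\<^sup>+\<close> agree, while
    those of \<open>X\<close> do not; the third column of \<open>Y A\<close> has length at least \<open>1\<close> for every right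
    inverse \<open>Y\<close>, and \<open>X A\<close> has no longer column.\<close>
  define X :: "complex mat" where "X = mat_of_rows_list 2 [[1, 0], [0, 0], [0, 1]]"
  have A: "A \<in> carrier_mat 2 3" and X: "X \<in> carrier_mat 3 2"
    by (simp_all add: A_def X_def mat_of_rows_list_def numeral_2_eq_2 numeral_3_eq_3)
  have "A * X = 1\<^sub>m 2"
    by (auto simp: A_def X_def mat_eq_iff mat_of_rows_list_def scalar_prod_def less_Suc_eq
        numeral_eq_Suc lessThan_Suc)
  then have XG: "X \<in> ginvs A" using A X by (simp add: ginvs_iff)
  then show r: "full_row_rank A" using full_row_rank_iff_right_inverse[OF A] A by (auto simp: ginvs_iff)
  have "X * A = mat_of_rows_list 3 [[1, 1, 0], [0, 0, 0], [0, 0, 1]]"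
    by (auto simp: A_def X_def mat_eq_iff mat_of_rows_list_def scalar_prod_def less_Suc_eq
        numeral_eq_Suc lessThan_Suc)
  then have "colnorm \<infinity> (X * A) \<le> 1"
    by (intro colnorm_inf_le) (auto simp: col_norm2_def mat_of_rows_list_def less_Suc_eq
        numeral_eq_Suc lessThan_Suc)
  moreover have "1 \<le> colnorm \<infinity> (Y * A)" if "Y \<in> ginvs A" for Y
  proof -
    have Y: "Y \<in> carrier_mat 3 2" and "A * Y = 1\<^sub>m 2" using that A by (auto simp: ginvs_iff)
    then have "(Y * A) $$ (2, 2) = 1"
      by (auto simp: A_def mat_eq_iff mat_of_rows_list_def scalar_prod_def numeral_eq_Suc lessThan_Suc)
    then show ?thesis
      using col_norm2_ge_entry[of 2 "Y * A" 2] colnorm_inf_ge[of 2 "Y * A"] Y A by auto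
  qed
  ultimately have "X \<in> pginv \<infinity> A" using XG by (force simp: pginv_def)
  moreover have "pinv A $$ (0, 0) = pinv A $$ (1, 0)"
    by (rule pinv_index_eq_if_col_eq[OF A r])
      (auto simp: A_def mat_of_rows_list_def vec_eq_iff less_Suc_eq numeral_eq_Suc)
  moreover have "X $$ (0, 0) \<noteq> X $$ (1, 0)" by (simp add: X_def mat_of_rows_list_def)
  ultimately show "\<exists>X \<in> pginv \<infinity> A. X \<noteq> pinv A" by metis
qed

theorem corollary2:
  shows "(\<forall>(m::nat) (n::nat) (A::complex mat) (q::ereal).
            A \<in> carrier_mat m n \<and> m < n \<and> full_row_rank A \<and> 1 \<le> q \<longrightarrow>
              pinv A \<in> ginv q A \<and> pinv A \<in> pginv q A \<and>
              (q \<noteq> \<infinity> \<longrightarrow> ginv q A = {pinv A} \<and> pginv q A = {pinv A}))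
       \<and> (\<forall>\<eta>::real. 0 < \<eta> \<and> \<eta> < 1 \<longrightarrow>
            (let A = mat_of_rows_list 3 [[complex_of_real (1 / \<eta>), 0, 0], [0, 1, 0]]
             in full_row_rank A \<and> (\<exists>X \<in> ginv \<infinity> A. X \<noteq> pinv A)))
       \<and> (\<exists>(m::nat) (n::nat) (A::complex mat).
            A \<in> carrier_mat m n \<and> m < n \<and> full_row_rank A \<and>
            (\<exists>X \<in> pginv \<infinity> A. X \<noteq> pinv A))"
proof -
  have "pinv A \<in> ginv q A \<and> pinv A \<in> pginv q A \<and>
      (q \<noteq> \<infinity> \<longrightarrow> ginv q A = {pinv A} \<and> pginv q A = {pinv A})"
    if A: "A \<in> carrier_mat m n" and r: "full_row_rank A" and q: "1 \<le> q" for m n A and q :: ereal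
    using pinv_mem_ginv[OF A r q] pinv_mem_pginv[OF A r q] ginv_eq_pinv[OF A r q] pginv_eq_pinv[OF A r q]
    by blast
  moreover have "\<exists>(m::nat) (n::nat) (A::complex mat). A \<in> carrier_mat m n \<and> m < n \<and> full_row_rank A \<and>
      (\<exists>X \<in> pginv \<infinity> A. X \<noteq> pinv A)"
  proof (intro exI conjI)
    show "mat_of_rows_list 3 [[1, 1, 0], [0, 0, 1]] \<in> carrier_mat 2 3"
      by (simp add: mat_of_rows_list_def numeral_2_eq_2 numeral_3_eq_3)
  qed (use pginv_inf_ne_pinv in auto)
  ultimately show ?thesis
    unfolding Let_def using ginv_inf_ne_pinv by blast
qed

end
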